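(* Let $G$ be a linear group (a subgroup of $GL_n(K)$ for some field $K$ and some $n$). Then the commutator subgroup $F'$ of $F$ is a set of weak identities in $G$.
   Context: Let $F$ be the free group on countably many generators $g_1,g_2,\dots$, and $F'=[F,F]$ its commutator subgroup. For $N\ge 1$, $F^{\times N}$ denotes the direct product of $N$ copies of $F$ and $i_k: F\to F^{\times N}$ the inclusion as the $k$-th factor. A subset $S\subset F$ is a set of weak identities in a group $G$ if there exists an integer $N\ge1$ such that for any elements $s_1,\dots,s_N\in S$ and any homomorphism $\rho: F^{\times N}\to G$ there is an index $k\in\{1,\dots,N\}$ with $\rho(i_k(s_k))=1$. *)

theory Defs
  imports "HOL-Analysis.Analysis" "HOL-Algebra.Algebra"
begin

text \<open>Free group on countably many generators g_0, g_1, ... (indexed by nat).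
 Elements are reduced words; a letter (i, False) is g_i, a letter (i, True) is g_i^-1.\<close>

type_synonym fword = "(nat \<times> bool) list"

fun freduced :: "fword \<Rightarrow> bool" where
  "freduced [] = True"
| "freduced [x] = True"
| "freduced (x # y # zs) = (\<not> (fst x = fst y \<and> snd x \<noteq> snd y) \<and> freduced (y # zs))"

definition fcons :: "nat \<times> bool \<Rightarrow> fword \<Rightarrow> fword" where
  "fcons x ys = (case ys of [] \<Rightarrow> [x]
     | y # ys' \<Rightarrow> (if fst x = fst y \<and> snd x \<noteq> snd y then ys' else x # ys))"

definition fmult :: "fword \<Rightarrow> fword \<Rightarrow> fword" where
  "fmult xs ys = foldr fcons xs ys"

definition free_group :: "fword monoid" where
  "free_group = \<lparr>carrier = {w. freduced w}, mult = fmult, one = []\<rparr>"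

definition free_commutator :: "fword set" where
  "free_commutator = derived free_group (carrier free_group)"

definition free_power :: "nat \<Rightarrow> (nat \<Rightarrow> fword) monoid" where
  "free_power N = product_group {1..N} (\<lambda>_. free_group)"

definition free_incl :: "nat \<Rightarrow> nat \<Rightarrow> fword \<Rightarrow> (nat \<Rightarrow> fword)" where
  "free_incl N k x = (\<lambda>i\<in>{1..N}. if i = k then x else \<one>\<^bsub>free_group\<^esub>)"

definition weak_identities :: "('g, 'b) monoid_scheme \<Rightarrow> fword set \<Rightarrow> bool" where
  "weak_identities G S \<longleftrightarrow> (\<exists>N::nat. N \<ge> 1 \<and>
     (\<forall>s. (\<forall>k\<in>{1..N}. s k \<in> S) \<longrightarrow>
       (\<forall>\<rho> \<in> hom (free_power N) G. \<exists>k\<in>{1..N}. \<rho> (free_incl N k (s k)) = \<one>\<^bsub>G\<^esub>)))"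

text \<open>General linear group GL_n(K), with n given by the finite index type 'n.\<close>
definition GL :: "('k::field ^'n^'n) monoid" where
  "GL = \<lparr>carrier = {A. invertible A}, mult = (**), one = mat 1\<rparr>"

end

theory Submission
  imports Defs
begin

text \<open>Suppose no \<open>\<rho> (i\<^sub>k s\<^sub>k)\<close> is trivial. Then \<open>\<rho> \<circ> i\<^sub>k\<close> does not kill the
  commutator \<open>s\<^sub>k\<close>, so its image is non-abelian and contains non-commuting
  \<open>a\<^sub>k, b\<^sub>k\<close>. Images of different factors commute, so \<open>a\<^sub>k\<close> commutes with \<open>b\<^sub>j\<close>
  exactly when \<open>j \<noteq> k\<close>. In \<open>GL\<^sub>n(K)\<close> the linear map \<open>X \<mapsto> b\<^sub>j X - X b\<^sub>j\<close> kills every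
  \<open>a\<^sub>k\<close> except \<open>a\<^sub>j\<close>, so the \<open>a\<^sub>k\<close> are linearly independent in the \<open>n\<^sup>2\<close>-dimensional
  matrix space. Hence \<open>N = n\<^sup>2 + 1\<close> factors are too many.\<close>

lemma (in vector_space) independent_if_separated_by_linear_maps:
  assumes fin: "finite I"
    and lin: "\<And>j. j \<in> I \<Longrightarrow> Vector_Spaces.linear scale scale (D j)"
    and off: "\<And>j k. j \<in> I \<Longrightarrow> k \<in> I \<Longrightarrow> j \<noteq> k \<Longrightarrow> D j (a k) = 0"
    and diag: "\<And>k. k \<in> I \<Longrightarrow> D k (a k) \<noteq> 0"
  shows "independent (a ` I)" and "inj_on a I"
proof -
  show "inj_on a I"
    by (rule inj_onI) (metis diag off)
  show "independent (a ` I)"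
  proof (rule independent_if_scalars_zero)
    show "finite (a ` I)" using fin by simp
    fix f x assume sum: "(\<Sum>y\<in>a ` I. scale (f y) y) = 0" and x: "x \<in> a ` I"
    then obtain j where j: "j \<in> I" "x = a j" by blast
    have hom: "module_hom scale scale (D j)"
      using lin[OF j(1)] by (simp add: linear_iff_module_hom)
    have "0 = D j (\<Sum>y\<in>a ` I. scale (f y) y)"
      using sum module_hom.zero[OF hom] by simp
    also have "\<dots> = (\<Sum>y\<in>a ` I. scale (f y) (D j y))"
      by (simp add: module_hom.sum[OF hom] module_hom.scale[OF hom])
    also have "\<dots> = scale (f x) (D j x) + (\<Sum>y\<in>a ` I - {x}. scale (f y) (D j y))"
      using fin x by (simp add: sum.remove)
    also have "(\<Sum>y\<in>a ` I - {x}. scale (f y) (D j y)) = 0"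
      using j off by (intro sum.neutral) auto
    finally show "f x = 0"
      using diag[OF j(1)] j(2) by simp
  qed
qed

lemma card_le_CARD_if_separated_by_linear_maps:
  fixes a :: "'i \<Rightarrow> 'k::field^'m" and D :: "'i \<Rightarrow> 'k^'m \<Rightarrow> 'k^'m"
  assumes "finite I"
    and "\<And>j. j \<in> I \<Longrightarrow> Vector_Spaces.linear (*s) (*s) (D j)"
    and "\<And>j k. j \<in> I \<Longrightarrow> k \<in> I \<Longrightarrow> j \<noteq> k \<Longrightarrow> D j (a k) = 0"
    and "\<And>k. k \<in> I \<Longrightarrow> D k (a k) \<noteq> 0"
  shows "card I \<le> CARD('m)"
proof -
  have "card I = card (a ` I)"
    using vec.independent_if_separated_by_linear_maps(2)[OF assms] by (simp add: card_image)
  also have "\<dots> \<le> vec.dim (UNIV :: ('k^'m) set)"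
    using vec.independent_card_le_dim[OF subset_UNIV vec.independent_if_separated_by_linear_maps(1)[OF assms]] .
  finally show ?thesis by (simp only: vec_dim_card)
qed

definition vec_of_matrix :: "'k^'n^'n \<Rightarrow> 'k^('n \<times> 'n)" where
  "vec_of_matrix A = (\<chi> p. A $ fst p $ snd p)"

definition matrix_of_vec :: "'k^('n \<times> 'n) \<Rightarrow> 'k^'n^'n" where
  "matrix_of_vec v = (\<chi> i j. v $ (i, j))"

lemma matrix_of_vec_of_matrix [simp]: "matrix_of_vec (vec_of_matrix A) = A"
  by (simp add: vec_of_matrix_def matrix_of_vec_def vec_eq_iff)

lemma vec_of_matrix_eq_0_iff [simp]: "vec_of_matrix A = 0 \<longleftrightarrow> A = 0"
proof
  assume "vec_of_matrix A = 0"
  then have "A = matrix_of_vec 0" by (metis matrix_of_vec_of_matrix)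
  then show "A = 0" by (simp add: matrix_of_vec_def vec_eq_iff)
qed (simp add: vec_of_matrix_def vec_eq_iff)

definition commutator_map :: "'k::field^'n^'n \<Rightarrow> 'k^('n \<times> 'n) \<Rightarrow> 'k^('n \<times> 'n)" where
  "commutator_map B v = vec_of_matrix (B ** matrix_of_vec v - matrix_of_vec v ** B)"

lemma linear_commutator_map: "Vector_Spaces.linear (*s) (*s) (commutator_map B)"
proof -
  have add: "commutator_map B (v + w) = commutator_map B v + commutator_map B w" for v w
    by (simp add: commutator_map_def vec_of_matrix_def matrix_of_vec_def vec_eq_iff
        matrix_matrix_mult_def sum.distrib algebra_simps)
  have scale: "commutator_map B (c *s v) = c *s commutator_map B v" for c v
    by (simp add: commutator_map_def vec_of_matrix_def matrix_of_vec_def vec_eq_iff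
        matrix_matrix_mult_def sum_distrib_left algebra_simps)
  show ?thesis
    unfolding Vector_Spaces.linear_iff using vec.vector_space_axioms add scale by blast
qed

lemma commutator_map_vec_of_matrix_eq_0_iff:
  "commutator_map B (vec_of_matrix A) = 0 \<longleftrightarrow> A ** B = B ** A"
  by (auto simp: commutator_map_def)

lemma card_le_if_commutation_pattern:
  fixes a b :: "'i \<Rightarrow> 'k::field^'n^'n"
  assumes "finite I"
    and "\<And>j k. j \<in> I \<Longrightarrow> k \<in> I \<Longrightarrow> j \<noteq> k \<Longrightarrow> a k ** b j = b j ** a k"
    and "\<And>k. k \<in> I \<Longrightarrow> a k ** b k \<noteq> b k ** a k"
  shows "card I \<le> CARD('n)\<^sup>2"
proof -
  have "card I \<le> CARD('n \<times> 'n)"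
    by (rule card_le_CARD_if_separated_by_linear_maps[where a = "vec_of_matrix \<circ> a"
          and D = "\<lambda>j. commutator_map (b j)"])
      (use assms in \<open>simp_all add: linear_commutator_map commutator_map_vec_of_matrix_eq_0_iff\<close>)
  then show ?thesis by (simp add: power2_eq_square)
qed

lemma freduced_ConsD: "freduced (y # ys) \<Longrightarrow> freduced ys"
  by (cases ys) auto

lemma freduced_fcons: "freduced ys \<Longrightarrow> freduced (fcons x ys)"
  by (cases ys) (auto simp: fcons_def dest: freduced_ConsD)

lemma fmult_Cons: "fmult (x # xs) ys = fcons x (fmult xs ys)"
  by (simp add: fmult_def)

lemma fmult_Nil: "fmult [] ys = ys"
  by (simp add: fmult_def)

lemma freduced_fmult: "freduced ys \<Longrightarrow> freduced (fmult xs ys)"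
  by (induction xs) (auto simp: fmult_Cons fmult_Nil freduced_fcons)

lemma fcons_Nil: "fcons x [] = [x]"
  by (simp add: fcons_def)

lemma fcons_Cons_cancel: "fst x = fst y \<Longrightarrow> snd x \<noteq> snd y \<Longrightarrow> fcons x (y # ys) = ys"
  by (simp add: fcons_def)

lemma fcons_Cons_keep: "\<not> (fst x = fst y \<and> snd x \<noteq> snd y) \<Longrightarrow> fcons x (y # ys) = x # y # ys"
  by (simp add: fcons_def)

lemma fcons_fcons_inverse:
  assumes "freduced w"
  shows "fcons x (fcons (fst x, \<not> snd x) w) = w"
proof (cases w)
  case Nil
  then show ?thesis by (simp add: fcons_Nil fcons_Cons_cancel)
next
  case (Cons y w')
  show ?thesis
  proof (cases "y = x")
    case True
    then have cancel: "fcons (fst x, \<not> snd x) w = w'" using Cons by (simp add: fcons_Cons_cancel)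
    show ?thesis
    proof (cases w')
      case Nil
      then show ?thesis using Cons True cancel by (simp add: fcons_Nil)
    next
      case (Cons z w'')
      then have "\<not> (fst x = fst z \<and> snd x \<noteq> snd z)" using assms \<open>w = y # w'\<close> True by simp
      then show ?thesis using cancel Cons \<open>w = y # w'\<close> True by (simp add: fcons_Cons_keep)
    qed
  next
    case False
    then have "\<not> (fst (fst x, \<not> snd x) = fst y \<and> snd (fst x, \<not> snd x) \<noteq> snd y)"
      by (cases x, cases y) auto
    then have keep: "fcons (fst x, \<not> snd x) w = (fst x, \<not> snd x) # w" using Cons by (simp add: fcons_Cons_keep)
    show ?thesis unfolding keep by (rule fcons_Cons_cancel) auto
  qed
qed

lemma fmult_fcons:
  assumes "freduced ys" "freduced zs"
  shows "fmult (fcons x ys) zs = fcons x (fmult ys zs)"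
proof (cases ys)
  case Nil
  then show ?thesis by (simp add: fcons_Nil fmult_Cons fmult_Nil)
next
  case (Cons y ys')
  show ?thesis
  proof (cases "fst x = fst y \<and> snd x \<noteq> snd y")
    case True
    then have y: "y = (fst x, \<not> snd x)" by (cases y) auto
    have "fcons x (fmult ys zs) = fcons x (fcons (fst x, \<not> snd x) (fmult ys' zs))"
      using Cons y by (simp add: fmult_Cons)
    also have "\<dots> = fmult ys' zs"
      by (rule fcons_fcons_inverse[OF freduced_fmult[OF assms(2)]])
    finally show ?thesis using Cons True by (simp add: fcons_Cons_cancel)
  next
    case False
    then show ?thesis using Cons by (simp add: fcons_Cons_keep fmult_Cons)
  qed
qed

lemma fmult_assoc:
  assumes "freduced ys" "freduced zs"
  shows "fmult (fmult xs ys) zs = fmult xs (fmult ys zs)"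
  by (induction xs) (auto simp: fmult_Cons fmult_Nil fmult_fcons freduced_fmult assms)

lemma fmult_Nil_right: "freduced xs \<Longrightarrow> fmult xs [] = xs"
proof (induction xs)
  case Nil
  then show ?case by (simp add: fmult_Nil)
next
  case (Cons x xs)
  then have "fmult xs [] = xs" using freduced_ConsD by blast
  then show ?case using Cons.prems by (cases xs) (auto simp: fmult_Cons fcons_Nil fcons_Cons_keep)
qed

fun finv :: "fword \<Rightarrow> fword" where
  "finv [] = []"
| "finv (x # xs) = fmult (finv xs) [(fst x, \<not> snd x)]"

lemma freduced_finv: "freduced (finv xs)"
  by (induction xs) (auto intro: freduced_fmult)

lemma fmult_finv_left: "freduced xs \<Longrightarrow> fmult (finv xs) xs = []"
proof (induction xs)
  case Nil
  then show ?case by (simp add: fmult_Nil)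
next
  case (Cons x xs)
  have "fmult (finv (x # xs)) (x # xs) = fmult (finv xs) (fmult [(fst x, \<not> snd x)] (x # xs))"
    using Cons.prems by (simp add: fmult_assoc)
  also have "fmult [(fst x, \<not> snd x)] (x # xs) = xs"
    by (simp add: fmult_Cons fmult_Nil fcons_Cons_cancel)
  finally show ?case using Cons freduced_ConsD by metis
qed

lemma monoid_free_group: "monoid free_group"
  by (rule monoidI) (auto simp: free_group_def freduced_fmult fmult_assoc fmult_Nil fmult_Nil_right)

lemma group_free_group: "group free_group"
proof (rule monoid.group_l_invI[OF monoid_free_group])
  fix x assume "x \<in> carrier free_group"
  then show "\<exists>y\<in>carrier free_group. y \<otimes>\<^bsub>free_group\<^esub> x = \<one>\<^bsub>free_group\<^esub>"
    by (intro bexI[of _ "finv x"]) (auto simp: free_group_def freduced_finv fmult_finv_left)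
qed

lemma group_GL: "group (GL :: ('k::field^'n^'n) monoid)"
proof -
  have "invertible (mat 1 :: 'k^'n^'n)"
    unfolding invertible_def by (intro exI[of _ "mat 1"]) (simp add: matrix_mul_lid)
  then have "monoid (GL :: ('k^'n^'n) monoid)"
    by (intro monoidI) (auto simp: GL_def invertible_mult matrix_mul_assoc matrix_mul_lid matrix_mul_rid)
  then show ?thesis
  proof (rule monoid.group_l_invI)
    fix x :: "'k^'n^'n" assume "x \<in> carrier GL"
    then obtain y where "x ** y = mat 1" "y ** x = mat 1" by (auto simp: GL_def invertible_def)
    then show "\<exists>y\<in>carrier GL. y \<otimes>\<^bsub>GL\<^esub> x = \<one>\<^bsub>GL\<^esub>"
      by (intro bexI[of _ y]) (auto simp: GL_def invertible_def)
  qed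
qed

lemma (in group_hom) hom_derived_eq_one_if_commuting_image:
  assumes "\<And>u v. u \<in> carrier G \<Longrightarrow> v \<in> carrier G \<Longrightarrow> h u \<otimes>\<^bsub>H\<^esub> h v = h v \<otimes>\<^bsub>H\<^esub> h u"
    and "x \<in> derived G (carrier G)"
  shows "h x = \<one>\<^bsub>H\<^esub>"
proof -
  let ?I = "h ` carrier G"
  have "comm_group (H\<lparr>carrier := ?I\<rparr>)"
    by (rule group.group_comm_groupI[OF H.subgroup_imp_group[OF img_is_subgroup]])
      (use assms(1) in auto)
  then have "derived (H\<lparr>carrier := ?I\<rparr>) ?I = {\<one>\<^bsub>H\<^esub>}"
    using comm_group.derived_eq_singleton by fastforce
  moreover have "derived (H\<lparr>carrier := ?I\<rparr>) ?I = derived H ?I"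
    by (rule H.derived_consistent[OF subset_refl img_is_subgroup])
  moreover have "derived H ?I = h ` derived G (carrier G)"
    by (rule derived_img) simp
  ultimately show ?thesis
    using assms(2) by blast
qed

lemma free_incl_hom: "free_incl N k \<in> hom free_group (free_power N)"
  unfolding hom_def
  by (auto simp: free_power_def product_group_def free_incl_def free_group_def fmult_Nil
      freduced_fmult PiE_iff intro!: ext)

lemma free_incl_commute:
  assumes "j \<noteq> k" "x \<in> carrier free_group" "y \<in> carrier free_group"
  shows "free_incl N j x \<otimes>\<^bsub>free_power N\<^esub> free_incl N k y =
         free_incl N k y \<otimes>\<^bsub>free_power N\<^esub> free_incl N j x"
  using assms
  by (auto simp: free_power_def product_group_def free_incl_def free_group_def fmult_Nil
      fmult_Nil_right intro!: ext)

lemma hom_free_incl_commute: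
  assumes "\<rho> \<in> hom (free_power N) H" "j \<noteq> k" "x \<in> carrier free_group" "y \<in> carrier free_group"
  shows "\<rho> (free_incl N j x) \<otimes>\<^bsub>H\<^esub> \<rho> (free_incl N k y) =
         \<rho> (free_incl N k y) \<otimes>\<^bsub>H\<^esub> \<rho> (free_incl N j x)"
proof -
  have incl: "free_incl N i z \<in> carrier (free_power N)" if "z \<in> carrier free_group" for i z
    using free_incl_hom that by (rule hom_in_carrier)
  have "\<rho> (free_incl N j x) \<otimes>\<^bsub>H\<^esub> \<rho> (free_incl N k y) =
      \<rho> (free_incl N j x \<otimes>\<^bsub>free_power N\<^esub> free_incl N k y)"
    using assms(1) incl assms(3,4) by (simp add: hom_mult)
  also have "\<dots> = \<rho> (free_incl N k y \<otimes>\<^bsub>free_power N\<^esub> free_incl N j x)"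
    using free_incl_commute[OF assms(2-4)] by simp
  also have "\<dots> = \<rho> (free_incl N k y) \<otimes>\<^bsub>H\<^esub> \<rho> (free_incl N j x)"
    using assms(1) incl assms(3,4) by (simp add: hom_mult)
  finally show ?thesis .
qed

lemma hom_free_incl_not_commuting:
  assumes "group H" "\<rho> \<in> hom (free_power N) H"
    and "s \<in> free_commutator" "\<rho> (free_incl N k s) \<noteq> \<one>\<^bsub>H\<^esub>"
  obtains u v where "u \<in> carrier free_group" "v \<in> carrier free_group"
    "\<rho> (free_incl N k u) \<otimes>\<^bsub>H\<^esub> \<rho> (free_incl N k v) \<noteq> \<rho> (free_incl N k v) \<otimes>\<^bsub>H\<^esub> \<rho> (free_incl N k u)"
proof -
  have "group_hom free_group H (\<rho> \<circ> free_incl N k)"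
    using group_free_group assms(1) hom_compose[OF free_incl_hom assms(2)]
    by (simp add: group_hom_def group_hom_axioms_def)
  then have "\<not> (\<forall>u\<in>carrier free_group. \<forall>v\<in>carrier free_group.
      \<rho> (free_incl N k u) \<otimes>\<^bsub>H\<^esub> \<rho> (free_incl N k v) = \<rho> (free_incl N k v) \<otimes>\<^bsub>H\<^esub> \<rho> (free_incl N k u))"
    using group_hom.hom_derived_eq_one_if_commuting_image assms(3,4)
    unfolding free_commutator_def by fastforce
  then show ?thesis
    using that by blast
qed

lemma weak_identities_free_commutatorI:
  fixes N :: nat
  assumes "group H" "N \<ge> 1"
    and no_pattern: "\<And>a b. \<lbrakk>\<And>k. k \<in> {1..N} \<Longrightarrow> a k \<in> carrier H \<and> b k \<in> carrier H;
        \<And>j k. \<lbrakk>j \<in> {1..N}; k \<in> {1..N}; j \<noteq> k\<rbrakk> \<Longrightarrow> a k \<otimes>\<^bsub>H\<^esub> b j = b j \<otimes>\<^bsub>H\<^esub> a k;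
        \<And>k. k \<in> {1..N} \<Longrightarrow> a k \<otimes>\<^bsub>H\<^esub> b k \<noteq> b k \<otimes>\<^bsub>H\<^esub> a k\<rbrakk> \<Longrightarrow> False"
  shows "weak_identities H free_commutator"
  unfolding weak_identities_def
proof (intro exI[of _ N] conjI allI impI ballI)
  fix s \<rho>
  assume s: "\<forall>k\<in>{1..N}. s k \<in> free_commutator" and \<rho>: "\<rho> \<in> hom (free_power N) H"
  show "\<exists>k\<in>{1..N}. \<rho> (free_incl N k (s k)) = \<one>\<^bsub>H\<^esub>"
  proof (rule ccontr)
    assume "\<not> ?thesis"
    then have "\<forall>k\<in>{1..N}. \<exists>u v. u \<in> carrier free_group \<and> v \<in> carrier free_group \<and>
        \<rho> (free_incl N k u) \<otimes>\<^bsub>H\<^esub> \<rho> (free_incl N k v) \<noteq> \<rho> (free_incl N k v) \<otimes>\<^bsub>H\<^esub> \<rho> (free_incl N k u)"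
      using hom_free_incl_not_commuting[OF \<open>group H\<close> \<rho>] s by metis
    then obtain u v where uv: "\<And>k. k \<in> {1..N} \<Longrightarrow> u k \<in> carrier free_group \<and> v k \<in> carrier free_group \<and>
        \<rho> (free_incl N k (u k)) \<otimes>\<^bsub>H\<^esub> \<rho> (free_incl N k (v k)) \<noteq>
        \<rho> (free_incl N k (v k)) \<otimes>\<^bsub>H\<^esub> \<rho> (free_incl N k (u k))"
      by metis
    show False
    proof (rule no_pattern[of "\<lambda>k. \<rho> (free_incl N k (u k))" "\<lambda>k. \<rho> (free_incl N k (v k))"])
      show "\<rho> (free_incl N k (u k)) \<in> carrier H \<and> \<rho> (free_incl N k (v k)) \<in> carrier H"
        if "k \<in> {1..N}" for k
        using uv[OF that] hom_in_carrier[OF hom_compose[OF free_incl_hom \<rho>]] by simp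
      show "\<rho> (free_incl N k (u k)) \<otimes>\<^bsub>H\<^esub> \<rho> (free_incl N j (v j)) =
          \<rho> (free_incl N j (v j)) \<otimes>\<^bsub>H\<^esub> \<rho> (free_incl N k (u k))"
        if "j \<in> {1..N}" "k \<in> {1..N}" "j \<noteq> k" for j k
        using hom_free_incl_commute[OF \<rho>, of k j] uv that by simp
    qed (use uv in blast)
  qed
qed (use assms in simp)

theorem theorem3p4:
  fixes G :: "('k::field ^'n::finite^'n) set"
  assumes "subgroup G GL"
  shows "weak_identities (GL\<lparr>carrier := G\<rparr>) free_commutator"
proof (rule weak_identities_free_commutatorI[where N = "CARD('n)\<^sup>2 + 1"])
  show "group (GL\<lparr>carrier := G\<rparr>)"
    using subgroup.subgroup_is_group[OF assms group_GL] .
  fix a b :: "nat \<Rightarrow> 'k^'n^'n"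
  assume "\<And>j k. \<lbrakk>j \<in> {1..CARD('n)\<^sup>2 + 1}; k \<in> {1..CARD('n)\<^sup>2 + 1}; j \<noteq> k\<rbrakk> \<Longrightarrow>
      a k \<otimes>\<^bsub>GL\<lparr>carrier := G\<rparr>\<^esub> b j = b j \<otimes>\<^bsub>GL\<lparr>carrier := G\<rparr>\<^esub> a k"
    and "\<And>k. k \<in> {1..CARD('n)\<^sup>2 + 1} \<Longrightarrow>
      a k \<otimes>\<^bsub>GL\<lparr>carrier := G\<rparr>\<^esub> b k \<noteq> b k \<otimes>\<^bsub>GL\<lparr>carrier := G\<rparr>\<^esub> a k"
  then have "card {1..CARD('n)\<^sup>2 + 1} \<le> CARD('n)\<^sup>2"
    by (intro card_le_if_commutation_pattern[of _ a b]) (simp_all add: GL_def)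
  then show False by simp
qed simp

end
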